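(* Let $A$ be an infinite set and let $I$ be a set. Let $\mathcal{B}\subseteq\Omega(A)^{I}$ be a subalgebra of the direct power $\Omega(A)^{I}$. Then there is a filter $F$ on the partition lattice $\Pi(I)$ such that for every $f\in A^{I}$, we have $f\in\mathcal{B}$ if and only if $\Pi(f)\in F$.
   Context: For each $a\in A$ let $\hat{a}$ be a constant symbol, and for each $n\geq1$ and each function $f:A^{n}\to A$ let $\hat{f}$ be an $n$-ary operation symbol. $\Omega(A)$ is the algebra with universe $A$ in this signature in which $\hat{a}$ is interpreted as $a$ and $\hat{f}$ is interpreted as $f$ (so every element is a fundamental constant and every finitary function on $A$ is a fundamental operation). $\Pi(I)$ is the lattice of partitions of $I$ (partitions have nonempty blocks), ordered so that $P\preceq Q$ means $P$ refines $Q$; $P\wedge Q$ is the common refinement. For a function $f:I\to X$, $\Pi(f)=\{f^{-1}(\{x\}) : x\in X\}\setminus\{\emptyset\}$ is the partition of $I$ into the nonempty fibers of $f$. *)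

theory Defs
  imports "HOL-Library.FuncSet"
begin

text \<open>An n-ary operation f from A^n to A is
represented by a function on lists, of which only the values on lists of length n
with entries in A matter; every n-ary operation on A arises this way.\<close>

definition subalgebra_Omega_pow :: "'a set \<Rightarrow> 'i set \<Rightarrow> ('i \<Rightarrow> 'a) set \<Rightarrow> bool" where
  "subalgebra_Omega_pow A I B \<longleftrightarrow>
     B \<subseteq> (I \<rightarrow>\<^sub>E A) \<and>
     (\<forall>a\<in>A. (\<lambda>i\<in>I. a) \<in> B) \<and>
     (\<forall>n::nat. n \<ge> 1 \<longrightarrow>
        (\<forall>f :: 'a list \<Rightarrow> 'a. (\<forall>xs. length xs = n \<and> set xs \<subseteq> A \<longrightarrow> f xs \<in> A) \<longrightarrow>
          (\<forall>hs. length hs = n \<and> set hs \<subseteq> B \<longrightarrow> (\<lambda>i\<in>I. f (map (\<lambda>h. h i) hs)) \<in> B)))"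

definition is_partition :: "'i set \<Rightarrow> 'i set set \<Rightarrow> bool" where
  "is_partition I P \<longleftrightarrow> \<Union>P = I \<and> {} \<notin> P \<and> (\<forall>p\<in>P. \<forall>q\<in>P. p \<noteq> q \<longrightarrow> p \<inter> q = {})"

definition partitions :: "'i set \<Rightarrow> 'i set set set" where
  "partitions I = {P. is_partition I P}"

definition refines :: "'i set set \<Rightarrow> 'i set set \<Rightarrow> bool" where
  "refines P Q \<longleftrightarrow> (\<forall>p\<in>P. \<exists>q\<in>Q. p \<subseteq> q)"

definition part_meet :: "'i set set \<Rightarrow> 'i set set \<Rightarrow> 'i set set" where
  "part_meet P Q = {p \<inter> q | p q. p \<in> P \<and> q \<in> Q \<and> p \<inter> q \<noteq> {}}"

definition is_partition_filter :: "'i set \<Rightarrow> 'i set set set \<Rightarrow> bool" where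
  "is_partition_filter I F \<longleftrightarrow>
     F \<subseteq> partitions I \<and> F \<noteq> {} \<and>
     (\<forall>P\<in>F. \<forall>Q\<in>partitions I. refines P Q \<longrightarrow> Q \<in> F) \<and>
     (\<forall>P\<in>F. \<forall>Q\<in>F. part_meet P Q \<in> F)"

definition kernel_partition :: "'i set \<Rightarrow> ('i \<Rightarrow> 'a) \<Rightarrow> 'i set set" where
  "kernel_partition I f = {{i\<in>I. f i = x} | x. x \<in> f ` I}"

end

theory Submission
  imports Defs
begin

text \<open>Every map A \<rightarrow> A is a fundamental operation, so g is obtained from f \<in> B by a unary
operation exactly when g is constant on the fibres of f, i.e. when \<Pi>(f) refines \<Pi>(g). Hence B is
closed under coarsening of kernels, and F can be taken to be the up-set of {\<Pi>(f) | f \<in> B}. This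
up-set is closed under meets because A is infinite: an injection e : A \<times> A \<rightarrow> A is a binary
operation, and the kernel of i \<mapsto> e(f i, g i) is the common refinement of \<Pi>(f) and \<Pi>(g).\<close>

unbundle cardinal_syntax

lemma refines_refl: "refines P P"
  unfolding refines_def by auto

lemma refines_trans: "refines P Q \<Longrightarrow> refines Q R \<Longrightarrow> refines P R"
  unfolding refines_def by (meson order_trans)

lemma mem_part_meet:
  "a \<in> part_meet P Q \<longleftrightarrow> (\<exists>p\<in>P. \<exists>q\<in>Q. a = p \<inter> q \<and> p \<inter> q \<noteq> {})"
  unfolding part_meet_def by auto

lemma part_meet_partition:
  assumes "is_partition I P" "is_partition I Q"
  shows "is_partition I (part_meet P Q)"
  unfolding is_partition_def
proof (intro conjI ballI impI)
  have UP: "\<Union>P = I" and UQ: "\<Union>Q = I"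
    using assms unfolding is_partition_def by auto
  show "\<Union>(part_meet P Q) = I"
  proof
    show "\<Union>(part_meet P Q) \<subseteq> I"
      using UP by (auto simp: mem_part_meet)
    show "I \<subseteq> \<Union>(part_meet P Q)"
    proof
      fix x assume "x \<in> I"
      then have "x \<in> \<Union>P" "x \<in> \<Union>Q"
        by (simp_all add: UP UQ)
      then obtain p q where "p \<in> P" "q \<in> Q" "x \<in> p \<inter> q"
        by blast
      then have "p \<inter> q \<in> part_meet P Q"
        unfolding mem_part_meet by blast
      with \<open>x \<in> p \<inter> q\<close> show "x \<in> \<Union>(part_meet P Q)"
        by blast
    qed
  qed
  show "{} \<notin> part_meet P Q"
    by (simp add: mem_part_meet)
  fix a b assume "a \<in> part_meet P Q" "b \<in> part_meet P Q" "a \<noteq> b"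
  then obtain p q p' q' where "p \<in> P" "q \<in> Q" "p' \<in> P" "q' \<in> Q"
    and ab: "a = p \<inter> q" "b = p' \<inter> q'" "p \<noteq> p' \<or> q \<noteq> q'"
    unfolding mem_part_meet by blast
  moreover have "\<forall>p\<in>P. \<forall>p'\<in>P. p \<noteq> p' \<longrightarrow> p \<inter> p' = {}"
    and "\<forall>q\<in>Q. \<forall>q'\<in>Q. q \<noteq> q' \<longrightarrow> q \<inter> q' = {}"
    using assms unfolding is_partition_def by blast+
  ultimately have "p \<inter> p' = {} \<or> q \<inter> q' = {}"
    by blast
  then show "a \<inter> b = {}"
    using ab by auto
qed

lemma refines_part_meetI:
  assumes "{} \<notin> R" "refines R P" "refines R Q"
  shows "refines R (part_meet P Q)"
  unfolding refines_def
proof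
  fix r assume "r \<in> R"
  then obtain p q where "p \<in> P" "q \<in> Q" "r \<subseteq> p" "r \<subseteq> q" "r \<noteq> {}"
    using assms unfolding refines_def by blast
  then have "r \<subseteq> p \<inter> q" "p \<inter> q \<noteq> {}"
    by blast+
  moreover have "p \<inter> q \<in> part_meet P Q"
    using \<open>p \<in> P\<close> \<open>q \<in> Q\<close> calculation(2) unfolding mem_part_meet by blast
  ultimately show "\<exists>a\<in>part_meet P Q. r \<subseteq> a"
    by blast
qed

lemma part_meet_mono:
  assumes "refines P P'" "refines Q Q'"
  shows "refines (part_meet P Q) (part_meet P' Q')"
  unfolding refines_def
proof
  fix a assume "a \<in> part_meet P Q"
  then obtain p q where "p \<in> P" "q \<in> Q" "a = p \<inter> q" "a \<noteq> {}"
    unfolding mem_part_meet by blast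
  moreover obtain p' q' where "p' \<in> P'" "q' \<in> Q'" "p \<subseteq> p'" "q \<subseteq> q'"
    using assms \<open>p \<in> P\<close> \<open>q \<in> Q\<close> unfolding refines_def by blast
  ultimately have "a \<subseteq> p' \<inter> q'" "p' \<inter> q' \<noteq> {}"
    by blast+
  moreover have "p' \<inter> q' \<in> part_meet P' Q'"
    using \<open>p' \<in> P'\<close> \<open>q' \<in> Q'\<close> calculation(2) unfolding mem_part_meet by blast
  ultimately show "\<exists>a'\<in>part_meet P' Q'. a \<subseteq> a'"
    by blast
qed

definition partition_upset :: "'i set \<Rightarrow> 'i set set set \<Rightarrow> 'i set set set" where
  "partition_upset I S = {P \<in> partitions I. \<exists>Q\<in>S. refines Q P}"

lemma is_partition_filter_partition_upset:
  assumes "S \<subseteq> partitions I" "S \<noteq> {}"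
    and directed: "\<And>P Q. P \<in> S \<Longrightarrow> Q \<in> S \<Longrightarrow> \<exists>R\<in>S. refines R (part_meet P Q)"
  shows "is_partition_filter I (partition_upset I S)"
proof -
  have "part_meet P Q \<in> partition_upset I S"
    if PQ: "P \<in> partition_upset I S" "Q \<in> partition_upset I S" for P Q
  proof -
    obtain P0 Q0 where "P0 \<in> S" "Q0 \<in> S" "refines P0 P" "refines Q0 Q"
      using PQ unfolding partition_upset_def by blast
    moreover obtain R where "R \<in> S" "refines R (part_meet P0 Q0)"
      using directed \<open>P0 \<in> S\<close> \<open>Q0 \<in> S\<close> by blast
    ultimately have "refines R (part_meet P Q)"
      using part_meet_mono refines_trans by blast
    moreover have "part_meet P Q \<in> partitions I"
      using PQ part_meet_partition unfolding partition_upset_def partitions_def by blast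
    ultimately show ?thesis
      using \<open>R \<in> S\<close> unfolding partition_upset_def by blast
  qed
  moreover have "partition_upset I S \<noteq> {}"
  proof -
    obtain P where "P \<in> S"
      using assms(2) by blast
    then have "P \<in> partition_upset I S"
      using assms(1) refines_refl unfolding partition_upset_def by blast
    then show ?thesis by blast
  qed
  moreover have "Q \<in> partition_upset I S"
    if "P \<in> partition_upset I S" "Q \<in> partitions I" "refines P Q" for P Q
    using that refines_trans unfolding partition_upset_def by blast
  ultimately show ?thesis
    unfolding is_partition_filter_def partition_upset_def by blast
qed

lemma kernel_partition_partition: "is_partition I (kernel_partition I f)"
  unfolding is_partition_def kernel_partition_def by auto

lemma mem_kernel_partition:
  "p \<in> kernel_partition I f \<longleftrightarrow> (\<exists>i\<in>I. p = {j \<in> I. f j = f i})"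
  unfolding kernel_partition_def by auto

lemma refines_kernel_partition_iff:
  "refines (kernel_partition I f) (kernel_partition I g) \<longleftrightarrow>
     (\<forall>i\<in>I. \<forall>j\<in>I. f i = f j \<longrightarrow> g i = g j)"
proof
  assume refines: "refines (kernel_partition I f) (kernel_partition I g)"
  show "\<forall>i\<in>I. \<forall>j\<in>I. f i = f j \<longrightarrow> g i = g j"
  proof (intro ballI impI)
    fix i j assume "i \<in> I" "j \<in> I" "f i = f j"
    then have "{k \<in> I. f k = f i} \<in> kernel_partition I f"
      unfolding mem_kernel_partition by auto
    then obtain q where "q \<in> kernel_partition I g" "{k \<in> I. f k = f i} \<subseteq> q"
      using refines unfolding refines_def by blast
    moreover from this(1) obtain i' where q: "q = {k \<in> I. g k = g i'}"
      unfolding mem_kernel_partition by blast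
    moreover have "i \<in> {k \<in> I. f k = f i}" "j \<in> {k \<in> I. f k = f i}"
      using \<open>i \<in> I\<close> \<open>j \<in> I\<close> \<open>f i = f j\<close> by simp_all
    ultimately have "i \<in> q" "j \<in> q"
      by (simp_all add: subset_iff)
    then show "g i = g j"
      unfolding q by simp
  qed
next
  assume fibres: "\<forall>i\<in>I. \<forall>j\<in>I. f i = f j \<longrightarrow> g i = g j"
  show "refines (kernel_partition I f) (kernel_partition I g)"
    unfolding refines_def
  proof
    fix p assume "p \<in> kernel_partition I f"
    then obtain i where "i \<in> I" and p: "p = {j \<in> I. f j = f i}"
      unfolding mem_kernel_partition by blast
    then have "{j \<in> I. g j = g i} \<in> kernel_partition I g"
      unfolding mem_kernel_partition by auto
    moreover have "p \<subseteq> {j \<in> I. g j = g i}"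
      using fibres \<open>i \<in> I\<close> unfolding p by blast
    ultimately show "\<exists>q\<in>kernel_partition I g. p \<subseteq> q"
      by blast
  qed
qed

lemma factors_through_kernel:
  assumes "g \<in> I \<rightarrow> A" and fibres: "\<And>i j. i \<in> I \<Longrightarrow> j \<in> I \<Longrightarrow> f i = f j \<Longrightarrow> g i = g j"
  shows "\<exists>h\<in>A \<rightarrow> A. \<forall>i\<in>I. g i = h (f i)"
proof -
  define h where "h y = (if y \<in> f ` I then g (SOME i. i \<in> I \<and> f i = y) else y)" for y
  have some_fibre: "(SOME k. k \<in> I \<and> f k = f i) \<in> I \<and> f (SOME k. k \<in> I \<and> f k = f i) = f i"
    if "i \<in> I" for i
    by (rule someI[of _ i]) (simp add: that)
  have h_f: "h (f i) = g i" if "i \<in> I" for i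
  proof -
    have "h (f i) = g (SOME k. k \<in> I \<and> f k = f i)"
      using that unfolding h_def by simp
    also have "\<dots> = g i"
      using fibres[OF _ that] some_fibre[OF that] by blast
    finally show ?thesis .
  qed
  have "h y \<in> A" if "y \<in> A" for y
  proof (cases "y \<in> f ` I")
    case True
    then obtain i where "i \<in> I" "y = f i" by blast
    then show ?thesis
      using h_f assms(1) by auto
  next
    case False
    then show ?thesis
      using that unfolding h_def by simp
  qed
  then have "h \<in> A \<rightarrow> A"
    by (rule Pi_I)
  with h_f show ?thesis
    by (intro bexI[of _ h] ballI) simp_all
qed

lemma subalgebra_Omega_pow_closed:
  assumes "subalgebra_Omega_pow A I B" "n \<ge> 1"
    and "\<And>xs. length xs = n \<Longrightarrow> set xs \<subseteq> A \<Longrightarrow> op xs \<in> A"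
    and "length hs = n" "set hs \<subseteq> B"
  shows "(\<lambda>i\<in>I. op (map (\<lambda>h. h i) hs)) \<in> B"
  using assms unfolding subalgebra_Omega_pow_def by blast

lemma subalgebra_Omega_pow_comp1:
  assumes "subalgebra_Omega_pow A I B" "f \<in> B" "h \<in> A \<rightarrow> A"
  shows "(\<lambda>i\<in>I. h (f i)) \<in> B"
  using subalgebra_Omega_pow_closed[OF assms(1), of 1 "\<lambda>xs. h (hd xs)" "[f]"] assms(2,3)
  by (force simp: length_Suc_conv)

lemma subalgebra_Omega_pow_comp2:
  assumes "subalgebra_Omega_pow A I B" "f \<in> B" "g \<in> B" "\<And>x y. x \<in> A \<Longrightarrow> y \<in> A \<Longrightarrow> e x y \<in> A"
  shows "(\<lambda>i\<in>I. e (f i) (g i)) \<in> B"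
  using subalgebra_Omega_pow_closed[OF assms(1), of 2 "\<lambda>xs. e (xs ! 0) (xs ! 1)" "[f, g]"] assms(2-4)
  by (force simp: numeral_2_eq_2 length_Suc_conv)

lemma subalgebra_Omega_pow_coarsening:
  assumes sub: "subalgebra_Omega_pow A I B" and "f \<in> B" and g: "g \<in> I \<rightarrow>\<^sub>E A"
    and "refines (kernel_partition I f) (kernel_partition I g)"
  shows "g \<in> B"
proof -
  have "g \<in> I \<rightarrow> A"
    using g by (simp add: PiE_iff)
  moreover have "\<And>i j. i \<in> I \<Longrightarrow> j \<in> I \<Longrightarrow> f i = f j \<Longrightarrow> g i = g j"
    using assms(4) unfolding refines_kernel_partition_iff by blast
  ultimately obtain h where "h \<in> A \<rightarrow> A" and g_eq: "\<forall>i\<in>I. g i = h (f i)"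
    using factors_through_kernel by blast
  have "g = (\<lambda>i\<in>I. g i)"
    using g by simp
  also have "\<dots> = (\<lambda>i\<in>I. h (f i))"
    using g_eq by (simp cong: restrict_cong)
  finally show ?thesis
    using subalgebra_Omega_pow_comp1[OF sub \<open>f \<in> B\<close> \<open>h \<in> A \<rightarrow> A\<close>] by simp
qed

lemma infinite_pair_injection:
  assumes "infinite A"
  obtains e where "inj_on e (A \<times> A)" "e ` (A \<times> A) \<subseteq> A"
proof -
  have "|A \<times> A| \<le>o |A|"
    by (rule ordIso_imp_ordLeq[OF card_of_Times_same_infinite[OF assms]])
  then show ?thesis
    using that by (auto simp flip: card_of_ordLeq)
qed

lemma subalgebra_Omega_pow_kernel_meet:
  assumes "infinite A" and sub: "subalgebra_Omega_pow A I B" and "f \<in> B" "g \<in> B"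
  shows "\<exists>k\<in>B. refines (kernel_partition I k)
                  (part_meet (kernel_partition I f) (kernel_partition I g))"
proof -
  obtain e where e: "inj_on e (A \<times> A)" "e ` (A \<times> A) \<subseteq> A"
    using infinite_pair_injection[OF assms(1)] .
  define k where "k = (\<lambda>i\<in>I. e (f i, g i))"
  have "k \<in> B"
    unfolding k_def
    using subalgebra_Omega_pow_comp2[OF sub \<open>f \<in> B\<close> \<open>g \<in> B\<close>, of "\<lambda>x y. e (x, y)"] e(2) by blast
  moreover have "f i = f j \<and> g i = g j" if "i \<in> I" "j \<in> I" "k i = k j" for i j
  proof -
    have "f \<in> I \<rightarrow> A" "g \<in> I \<rightarrow> A"
      using sub assms(3,4) unfolding subalgebra_Omega_pow_def by blast+
    then have "(f i, g i) \<in> A \<times> A" "(f j, g j) \<in> A \<times> A"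
      using that(1,2) by auto
    moreover have "e (f i, g i) = e (f j, g j)"
      using that unfolding k_def by simp
    ultimately show ?thesis
      using inj_onD[OF e(1)] by blast
  qed
  then have "refines (kernel_partition I k) (kernel_partition I f)"
    and "refines (kernel_partition I k) (kernel_partition I g)"
    unfolding refines_kernel_partition_iff by blast+
  moreover have "{} \<notin> kernel_partition I k"
    using kernel_partition_partition unfolding is_partition_def by blast
  ultimately show ?thesis
    using refines_part_meetI by blast
qed

theorem mainTheorem1:
  fixes A :: "'a set" and I :: "'i set" and B :: "('i \<Rightarrow> 'a) set"
  assumes "infinite A"
    and "subalgebra_Omega_pow A I B"
  shows "\<exists>F. is_partition_filter I F \<and>
             (\<forall>f\<in>I \<rightarrow>\<^sub>E A. f \<in> B \<longleftrightarrow> kernel_partition I f \<in> F)"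
proof (intro exI conjI)
  let ?S = "kernel_partition I ` B"
  obtain a where "a \<in> A"
    using assms(1) by (metis ex_in_conv finite.emptyI)
  then have "?S \<noteq> {}"
    using assms(2) unfolding subalgebra_Omega_pow_def by blast
  moreover have "?S \<subseteq> partitions I"
    using kernel_partition_partition unfolding partitions_def by blast
  ultimately show "is_partition_filter I (partition_upset I ?S)"
    using subalgebra_Omega_pow_kernel_meet[OF assms]
    by (intro is_partition_filter_partition_upset) auto
  show "\<forall>f\<in>I \<rightarrow>\<^sub>E A. f \<in> B \<longleftrightarrow> kernel_partition I f \<in> partition_upset I ?S"
    using kernel_partition_partition refines_refl subalgebra_Omega_pow_coarsening[OF assms(2)]
    unfolding partition_upset_def partitions_def by blast
qed

end
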